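(* Let $S$ be an inverse semigroup with zero whose semilattice of idempotents is $0$-disjunctive. Then $S$ is a Clifford semigroup if and only if $S$ contains no infinitesimals.
   Context: A semigroup is inverse if each $s$ has a unique $s^{-1}$ with $s=ss^{-1}s$, $s^{-1}=s^{-1}ss^{-1}$; its idempotents form a meet semilattice with $e\le f$ iff $e=ef$. A meet semilattice with zero is $0$-disjunctive if for all $0\ne f<e$ there exists $0\ne g\le e$ with $fg=0$. A Clifford semigroup is an inverse semigroup whose idempotents are central. An infinitesimal is a non-zero element $a$ with $a^2=0$. *)

theory Defs
  imports Main
begin

text \<open>The semigroup S is the whole type 'a (with the multiplication of semigroup_mult).\<close>

definition inverse_semigroup :: "'a::semigroup_mult itself \<Rightarrow> bool" where
  "inverse_semigroup _ \<longleftrightarrow> (\<forall>s::'a. \<exists>!t. s = s * t * s \<and> t = t * s * t)"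

definition is_zero :: "'a::semigroup_mult \<Rightarrow> bool" where
  "is_zero z \<longleftrightarrow> (\<forall>x. z * x = z \<and> x * z = z)"

definition idem :: "'a::semigroup_mult \<Rightarrow> bool" where
  "idem e \<longleftrightarrow> e * e = e"

definition idem_le :: "'a::semigroup_mult \<Rightarrow> 'a \<Rightarrow> bool" where
  "idem_le e f \<longleftrightarrow> e = e * f"

definition zero_disjunctive :: "'a::semigroup_mult \<Rightarrow> bool" where
  "zero_disjunctive z \<longleftrightarrow>
     (\<forall>e f. idem e \<and> idem f \<and> f \<noteq> z \<and> idem_le f e \<and> f \<noteq> e \<longrightarrow>
        (\<exists>g. idem g \<and> g \<noteq> z \<and> idem_le g e \<and> f * g = z))"

definition clifford :: "'a::semigroup_mult itself \<Rightarrow> bool" where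
  "clifford T \<longleftrightarrow> inverse_semigroup T \<and> (\<forall>e s::'a. idem e \<longrightarrow> e * s = s * e)"

definition infinitesimal :: "'a::semigroup_mult \<Rightarrow> 'a \<Rightarrow> bool" where
  "infinitesimal z a \<longleftrightarrow> a \<noteq> z \<and> a * a = z"

end

theory Submission
  imports Defs
begin

text \<open>
  In an inverse semigroup the idempotents commute and \<open>(a b)\<inverse> = b\<inverse> a\<inverse>\<close>.
  If every idempotent is central, an infinitesimal \<open>a\<close> would satisfy
  \<open>a = (a a\<inverse>) a = a a a\<inverse> = 0\<close>. Conversely, without infinitesimals an idempotent
  \<open>g \<le> s s\<inverse>\<close> orthogonal to \<open>s\<inverse> s\<close> vanishes, because \<open>(g s)\<^sup>2 = g (s g) s = 0\<close>; by
  0-disjunctivity this forces \<open>s s\<inverse> \<le> s\<inverse> s\<close>, and by symmetry \<open>s s\<inverse> = s\<inverse> s\<close>. Once every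
  element has equal left and right units, comparing \<open>s e\<close> with its inverse \<open>e s\<inverse>\<close>
  shows that every idempotent \<open>e\<close> commutes with \<open>s\<close>.
\<close>

definition sinv :: "'a::semigroup_mult \<Rightarrow> 'a" where
  "sinv s = (THE t. s = s * t * s \<and> t = t * s * t)"

context
  assumes inverse: "inverse_semigroup TYPE('a::semigroup_mult)"
begin

lemma sinv_unique_ex: "\<exists>!t. (s::'a) = s * t * s \<and> t = t * s * t"
  using inverse by (simp add: inverse_semigroup_def)

lemma mult_sinv_mult [simp]: "(s::'a) * sinv s * s = s"
  and sinv_mult_sinv [simp]: "sinv s * s * sinv s = sinv s"
  using theI'[OF sinv_unique_ex[of s]] by (simp_all add: sinv_def)

lemma sinv_unique: "(s::'a) * t * s = s \<Longrightarrow> t * s * t = t \<Longrightarrow> sinv s = t"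
  using sinv_unique_ex[of s] mult_sinv_mult[of s] sinv_mult_sinv[of s] by metis

lemma sinv_sinv [simp]: "sinv (sinv (s::'a)) = s"
  by (rule sinv_unique) simp_all

lemma sinv_idem: "idem (e::'a) \<Longrightarrow> sinv e = e"
  by (rule sinv_unique) (simp_all add: idem_def)

lemma idem_mult_sinv: "idem ((s::'a) * sinv s)"
  and idem_sinv_mult: "idem (sinv (s::'a) * s)"
  unfolding idem_def by (simp_all flip: mult.assoc)

lemma idem_mult:
  assumes e: "idem (e::'a)" and f: "idem f"
  shows "idem (e * f)"
proof -
  define x where "x = sinv (e * f)"
  have ee: "e * e = e" and ff: "f * f = f" using e f by (simp_all add: idem_def)
  have x1: "e * f * x * (e * f) = e * f" and x2: "x * (e * f) * x = x"
    by (simp_all add: x_def)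
  have "e * f * (f * x * e) * (e * f) = e * (f * f) * x * (e * e) * f"
    by (simp add: mult.assoc)
  also have "\<dots> = e * f" using x1 ee ff by (simp add: mult.assoc)
  finally have y1: "e * f * (f * x * e) * (e * f) = e * f" .
  have "f * x * e * (e * f) * (f * x * e) = f * (x * (e * e) * (f * f) * x) * e"
    by (simp add: mult.assoc)
  also have "\<dots> = f * x * e" using x2 ee ff by (simp add: mult.assoc)
  finally have "sinv (e * f) = f * x * e" using y1 sinv_unique by blast
  then have xfe: "x = f * x * e" by (simp add: x_def)
  have xx: "x * x = x"
    using xfe x2 by (metis mult.assoc)
  have "e * f = sinv x" by (simp add: x_def)
  also have "\<dots> = x" using xx by (simp add: sinv_idem idem_def)
  finally show ?thesis using xx by (simp add: idem_def)
qed

lemma idem_commute: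
  assumes e: "idem (e::'a)" and f: "idem f"
  shows "e * f = f * e"
proof -
  have ee: "e * e = e" and ff: "f * f = f" using e f by (simp_all add: idem_def)
  have ef: "e * f * (e * f) = e * f" and fe: "f * e * (f * e) = f * e"
    using idem_mult e f by (simp_all add: idem_def)
  have "e * f * (f * e) * (e * f) = e * f" "f * e * (e * f) * (f * e) = f * e"
    using ee ff ef fe by (metis mult.assoc)+
  then have "sinv (e * f) = f * e" by (rule sinv_unique)
  moreover have "sinv (e * f) = e * f" using idem_mult[OF e f] by (rule sinv_idem)
  ultimately show ?thesis by simp
qed

lemma sinv_mult: "sinv ((a::'a) * b) = sinv b * sinv a"
proof (rule sinv_unique)
  have "b * sinv b * (sinv a * a) = sinv a * a * (b * sinv b)"
    using idem_commute idem_mult_sinv idem_sinv_mult by blast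
  then show "a * b * (sinv b * sinv a) * (a * b) = a * b"
    and "sinv b * sinv a * (a * b) * (sinv b * sinv a) = sinv b * sinv a"
    by (metis mult.assoc mult_sinv_mult sinv_mult_sinv)+
qed

lemma clifford_imp_no_infinitesimal:
  assumes "clifford TYPE('a)" and "is_zero z"
  shows "\<not> infinitesimal z (a::'a)"
proof
  assume "infinitesimal z a"
  then have a: "a \<noteq> z" "a * a = z" by (simp_all add: infinitesimal_def)
  have "a = a * sinv a * a" by simp
  also have "\<dots> = a * (a * sinv a)"
    using assms(1) idem_mult_sinv[of a] unfolding clifford_def by (metis mult.assoc)
  also have "\<dots> = z" using a assms(2) by (simp add: is_zero_def flip: mult.assoc)
  finally show False using a by simp
qed

lemma idem_orthogonal_eq_zero:
  assumes zero: "is_zero z" and no_inf: "\<forall>a. \<not> infinitesimal z (a::'a)"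
    and g: "idem g" and g_le: "idem_le g (s * sinv s)" and orth: "g * (sinv s * s) = z"
  shows "g = z"
proof -
  have "s * g = s * (sinv s * s * g)" by (simp flip: mult.assoc)
  also have "\<dots> = s * (g * (sinv s * s))" using idem_commute[OF g idem_sinv_mult] by simp
  finally have "s * g = z" using orth zero by (simp add: is_zero_def)
  moreover have "g * s * (g * s) = g * (s * g) * s" by (simp add: mult.assoc)
  ultimately have "g * s * (g * s) = z" using zero by (simp add: is_zero_def)
  then have "g * s = z" using no_inf by (auto simp: infinitesimal_def)
  then have "g * s * sinv s = z" using zero by (simp add: is_zero_def)
  then show "g = z" using g_le by (simp add: idem_le_def mult.assoc)
qed

lemma mult_sinv_le_sinv_mult:
  assumes zero: "is_zero z" and disj: "zero_disjunctive z"
    and no_inf: "\<forall>a. \<not> infinitesimal z (a::'a)"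
  shows "idem_le (s * sinv s) (sinv s * (s::'a))"
proof (rule ccontr)
  define e f where "e = s * sinv s" and "f = sinv s * s"
  assume "\<not> idem_le (s * sinv s) (sinv s * s)"
  then have ne: "e * f \<noteq> e" by (simp add: e_def f_def idem_le_def)
  have e: "idem e" and f: "idem f" by (simp_all add: e_def f_def idem_mult_sinv idem_sinv_mult)
  have ef: "idem (e * f)" using idem_mult[OF e f] .
  have ef_le: "idem_le (e * f) e"
    using idem_commute[OF e f] e by (simp add: idem_le_def idem_def mult.assoc)
  obtain g where g: "idem g" "g \<noteq> z" "idem_le g e" "e * f * g = z"
  proof (cases "e * f = z")
    case True
    with ne e zero show ?thesis
      by (intro that[of e]) (simp_all add: idem_le_def idem_def is_zero_def)
  next
    case False
    with disj ef ef_le ne e show ?thesis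
      unfolding zero_disjunctive_def using that by blast
  qed
  have "g * f = f * (e * g)"
    using idem_commute[OF g(1) f] idem_commute[OF e g(1)] g(3) by (simp add: idem_le_def)
  also have "\<dots> = z" using idem_commute[OF e f] g(4) by (simp add: mult.assoc)
  finally have "g = z"
    using idem_orthogonal_eq_zero[OF zero no_inf g(1)] g(3) by (simp add: e_def f_def)
  with g(2) show False ..
qed

lemma mult_sinv_eq_sinv_mult:
  assumes "is_zero z" and "zero_disjunctive z" and "\<forall>a. \<not> infinitesimal z (a::'a)"
  shows "s * sinv s = sinv s * (s::'a)"
proof -
  have "idem_le (s * sinv s) (sinv s * s)" and "idem_le (sinv s * s) (s * sinv s)"
    using mult_sinv_le_sinv_mult[OF assms, of s] mult_sinv_le_sinv_mult[OF assms, of "sinv s"]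
    by simp_all
  then show ?thesis
    using idem_commute[OF idem_mult_sinv idem_sinv_mult, of s s] by (simp add: idem_le_def)
qed

lemma idem_central_if_mult_sinv_eq_sinv_mult:
  assumes units: "\<And>s::'a. s * sinv s = sinv s * s" and e: "idem (e::'a)"
  shows "e * s = s * e"
proof -
  define p where "p = sinv s * s"
  have ep: "e * p = p * e" using idem_commute[OF e idem_sinv_mult] by (simp add: p_def)
  have "s * e * sinv (s * e) = s * (e * e) * sinv s"
    by (simp add: sinv_mult sinv_idem[OF e] mult.assoc)
  then have "s * e * sinv s = s * e * sinv (s * e)" using e by (simp add: idem_def)
  also have "\<dots> = sinv (s * e) * (s * e)" using units .
  also have "\<dots> = e * p * e"
    using sinv_mult[of s e] by (simp add: sinv_idem[OF e] p_def mult.assoc)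
  also have "\<dots> = e * p" using ep e by (simp add: idem_def mult.assoc)
  finally have conj: "s * e * sinv s = e * p" .
  have ps: "p * s = s" using units[of s] by (metis p_def mult_sinv_mult)
  have "s * e = s * p * e" by (simp add: p_def flip: mult.assoc)
  also have "\<dots> = s * (e * p)" using ep by (simp add: mult.assoc)
  also have "\<dots> = s * e * sinv s * s" by (simp add: p_def mult.assoc)
  also have "\<dots> = e * p * s" by (simp only: conj)
  also have "\<dots> = e * s" by (simp add: ps mult.assoc)
  finally show ?thesis by simp
qed

end

theorem mainTheorem17:
  fixes z :: "'a::semigroup_mult"
  assumes "inverse_semigroup TYPE('a)"
    and "is_zero z"
    and "zero_disjunctive z"
  shows "clifford TYPE('a) \<longleftrightarrow> \<not> (\<exists>a. infinitesimal z a)"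
proof
  assume "clifford TYPE('a)"
  then show "\<not> (\<exists>a. infinitesimal z a)"
    using clifford_imp_no_infinitesimal assms(1,2) by blast
next
  assume "\<not> (\<exists>a. infinitesimal z a)"
  then have "s * sinv s = sinv s * s" for s :: 'a
    using mult_sinv_eq_sinv_mult assms by blast
  then show "clifford TYPE('a)"
    using idem_central_if_mult_sinv_eq_sinv_mult[OF assms(1)] assms(1)
    unfolding clifford_def by blast
qed

end
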